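(* Let $R$ be a ring, let $N\ge0$ and $0\le n\le N$, and let $\mathfrak{J}$ be a set of subsets of $[0,N]=\{0,1,\dots,N\}$. In $R[X_1,\dots,X_N]$ put $X_0:=1-X_1-\cdots-X_N$. Then \[(X_{n+1},\dots,X_N)+\bigcap_{J\in\mathfrak{J}}(X_i)_{i\in J}=\bigcap_{J\in\mathfrak{J}}\Big((X_i)_{i\in J}+(X_{n+1},\dots,X_N)\Big).\] *)

theory Defs
  imports Main "HOL-Library.Poly_Mapping"
begin

text \<open>Polynomials over a commutative ring 'a in variables indexed by nat:
  a polynomial is a finitely supported map from monomials (exponent vectors)
  to coefficients.\<close>

type_synonym 'a mpoly = "(nat \<Rightarrow>\<^sub>0 nat) \<Rightarrow>\<^sub>0 'a"

definition polyring :: "nat \<Rightarrow> 'a::comm_ring_1 mpoly set" where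
  "polyring N = {p :: 'a mpoly. \<forall>m \<in> Poly_Mapping.keys p. Poly_Mapping.keys m \<subseteq> {1..N}}"

definition Var :: "nat \<Rightarrow> nat \<Rightarrow> 'a::comm_ring_1 mpoly" where
  "Var N i = (if i = 0 then 1 - (\<Sum>j\<in>{1..N}. Poly_Mapping.single (Poly_Mapping.single j 1) 1)
              else Poly_Mapping.single (Poly_Mapping.single i 1) 1)"

definition gen_ideal :: "nat \<Rightarrow> 'a::comm_ring_1 mpoly set \<Rightarrow> 'a mpoly set" where
  "gen_ideal N S = {(\<Sum>s\<in>F. c s * s) | F c. finite F \<and> F \<subseteq> S \<and> (\<forall>s\<in>F. c s \<in> polyring N)}"

definition ideal_sum :: "'a::comm_ring_1 mpoly set \<Rightarrow> 'a mpoly set \<Rightarrow> 'a mpoly set" where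
  "ideal_sum I J = {a + b | a b. a \<in> I \<and> b \<in> J}"

text \<open>Intersection of a family of ideals of R[X_1,...,X_N] (empty family gives the whole ring).\<close>
definition ideal_Inter :: "nat \<Rightarrow> 'a::comm_ring_1 mpoly set set \<Rightarrow> 'a mpoly set" where
  "ideal_Inter N \<I> = polyring N \<inter> \<Inter>\<I>"

end

theory Submission
  imports Defs
begin

text \<open>Write \<open>K = (X\<^sub>n\<^sub>+\<^sub>1, \<dots>, X\<^sub>N)\<close>; only the inclusion \<open>\<supseteq>\<close> needs an argument.
  For \<open>k \<le> n\<close> let \<open>\<sigma>\<^sub>k\<close> be the ring endomorphism with \<open>X\<^sub>j \<mapsto> 0\<close> for \<open>j > n\<close>,
  \<open>X\<^sub>k \<mapsto> X\<^sub>k + X\<^sub>n\<^sub>+\<^sub>1 + \<dots> + X\<^sub>N\<close>, fixing all other variables.  It is the identity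
  modulo \<open>K\<close>, it kills \<open>K\<close>, and for \<open>k \<ge> 1\<close> it fixes \<open>X\<^sub>1 + \<dots> + X\<^sub>N\<close> and hence \<open>X\<^sub>0\<close>.
  So for \<open>k \<notin> J\<close> it maps \<open>(X\<^sub>i)\<^sub>i\<^sub>\<in>\<^sub>J + K\<close> into \<open>(X\<^sub>i)\<^sub>i\<^sub>\<in>\<^sub>J\<close>.  If \<open>f\<close> lies in every
  \<open>(X\<^sub>i)\<^sub>i\<^sub>\<in>\<^sub>J + K\<close>, then \<open>h = \<Sum>\<^sub>k\<^sub>\<le>\<^sub>n X\<^sub>k \<sigma>\<^sub>k(f)\<close> lies in every \<open>(X\<^sub>i)\<^sub>i\<^sub>\<in>\<^sub>J\<close>
  (each summand through \<open>X\<^sub>k\<close> if \<open>k \<in> J\<close>, through \<open>\<sigma>\<^sub>k(f)\<close> otherwise), while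
  \<open>X\<^sub>0 + \<dots> + X\<^sub>N = 1\<close> gives \<open>f - h = \<Sum>\<^sub>j\<^sub>>\<^sub>n X\<^sub>j f + \<Sum>\<^sub>k\<^sub>\<le>\<^sub>n X\<^sub>k (f - \<sigma>\<^sub>k(f)) \<in> K\<close>.\<close>

section \<open>Substitution of polynomials for variables\<close>

definition mvar :: "nat \<Rightarrow> 'a::comm_ring_1 mpoly" where
  "mvar i = Poly_Mapping.single (Poly_Mapping.single i 1) 1"

definition mconst :: "'a::comm_ring_1 \<Rightarrow> 'a mpoly" where
  "mconst a = Poly_Mapping.single 0 a"

definition monom_subst :: "(nat \<Rightarrow> 'a::comm_ring_1 mpoly) \<Rightarrow> (nat \<Rightarrow>\<^sub>0 nat) \<Rightarrow> 'a mpoly" where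
  "monom_subst \<sigma> m = (\<Prod>i\<in>Poly_Mapping.keys m. \<sigma> i ^ Poly_Mapping.lookup m i)"

definition poly_subst :: "(nat \<Rightarrow> 'a::comm_ring_1 mpoly) \<Rightarrow> 'a mpoly \<Rightarrow> 'a mpoly" where
  "poly_subst \<sigma> p = (\<Sum>m\<in>Poly_Mapping.keys p. mconst (Poly_Mapping.lookup p m) * monom_subst \<sigma> m)"

lemma poly_mapping_sum_single:
  "(p::'k \<Rightarrow>\<^sub>0 'v::comm_monoid_add) = (\<Sum>m\<in>Poly_Mapping.keys p. Poly_Mapping.single m (Poly_Mapping.lookup p m))"
  by (rule poly_mapping_eqI) (simp add: lookup_sum lookup_single when_def in_keys_iff)

lemma keys_add_nat: "Poly_Mapping.keys ((m::nat \<Rightarrow>\<^sub>0 nat) + m') = Poly_Mapping.keys m \<union> Poly_Mapping.keys m'"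
  by (auto simp: in_keys_iff lookup_add)

lemma mconst_add: "mconst (a + b) = mconst a + mconst b"
  by (simp add: mconst_def single_add)

lemma mconst_mult: "mconst (a * b) = mconst a * mconst b"
  by (simp add: mconst_def mult_single)

lemma monom_subst_superset:
  assumes "finite S" "Poly_Mapping.keys m \<subseteq> S"
  shows "monom_subst \<sigma> m = (\<Prod>i\<in>S. \<sigma> i ^ Poly_Mapping.lookup m i)"
  unfolding monom_subst_def using assms
  by (intro prod.mono_neutral_left) (auto simp: in_keys_iff)

lemma monom_subst_add: "monom_subst \<sigma> (m + m') = monom_subst \<sigma> m * monom_subst \<sigma> m'"
proof -
  let ?S = "Poly_Mapping.keys m \<union> Poly_Mapping.keys m'"
  have "monom_subst \<sigma> (m + m') = (\<Prod>i\<in>?S. \<sigma> i ^ Poly_Mapping.lookup (m + m') i)"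
    by (rule monom_subst_superset) (auto simp: keys_add_nat)
  also have "\<dots> = (\<Prod>i\<in>?S. \<sigma> i ^ Poly_Mapping.lookup m i * \<sigma> i ^ Poly_Mapping.lookup m' i)"
    by (simp add: lookup_add power_add)
  also have "\<dots> = monom_subst \<sigma> m * monom_subst \<sigma> m'"
    by (simp add: prod.distrib monom_subst_superset[of ?S m] monom_subst_superset[of ?S m'])
  finally show ?thesis .
qed

lemma poly_subst_superset:
  assumes "finite S" "Poly_Mapping.keys p \<subseteq> S"
  shows "poly_subst \<sigma> p = (\<Sum>m\<in>S. mconst (Poly_Mapping.lookup p m) * monom_subst \<sigma> m)"
  unfolding poly_subst_def using assms
  by (intro sum.mono_neutral_left) (auto simp: in_keys_iff mconst_def)

lemma poly_subst_add: "poly_subst \<sigma> (p + q) = poly_subst \<sigma> p + poly_subst \<sigma> q"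
proof -
  let ?S = "Poly_Mapping.keys p \<union> Poly_Mapping.keys q"
  have "poly_subst \<sigma> (p + q) = (\<Sum>m\<in>?S. mconst (Poly_Mapping.lookup (p + q) m) * monom_subst \<sigma> m)"
    by (rule poly_subst_superset) (auto dest: keys_add[THEN subsetD])
  also have "\<dots> = (\<Sum>m\<in>?S. mconst (Poly_Mapping.lookup p m) * monom_subst \<sigma> m
                         + mconst (Poly_Mapping.lookup q m) * monom_subst \<sigma> m)"
    by (simp add: lookup_add mconst_add distrib_right)
  also have "\<dots> = poly_subst \<sigma> p + poly_subst \<sigma> q"
    by (simp add: sum.distrib poly_subst_superset[of ?S p] poly_subst_superset[of ?S q])
  finally show ?thesis .
qed

lemma poly_subst_zero [simp]: "poly_subst \<sigma> 0 = 0"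
  by (simp add: poly_subst_def)

lemma poly_subst_diff: "poly_subst \<sigma> (p - q) = poly_subst \<sigma> p - poly_subst \<sigma> q"
  using poly_subst_add[of \<sigma> "p - q" q] by (simp add: eq_diff_eq)

lemma poly_subst_sum: "poly_subst \<sigma> (\<Sum>i\<in>A. f i) = (\<Sum>i\<in>A. poly_subst \<sigma> (f i))"
  by (induction A rule: infinite_finite_induct) (simp_all add: poly_subst_add)

lemma poly_subst_single: "poly_subst \<sigma> (Poly_Mapping.single m a) = mconst a * monom_subst \<sigma> m"
  by (cases "a = 0") (simp_all add: poly_subst_def mconst_def)

lemma poly_subst_mult: "poly_subst \<sigma> (p * q) = poly_subst \<sigma> p * poly_subst \<sigma> q"
proof -
  have "p * q = (\<Sum>m\<in>Poly_Mapping.keys p. \<Sum>m'\<in>Poly_Mapping.keys q.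
      Poly_Mapping.single (m + m') (Poly_Mapping.lookup p m * Poly_Mapping.lookup q m'))"
    by (subst poly_mapping_sum_single[of p], subst poly_mapping_sum_single[of q])
       (simp add: sum_product mult_single)
  then have "poly_subst \<sigma> (p * q) = (\<Sum>m\<in>Poly_Mapping.keys p. \<Sum>m'\<in>Poly_Mapping.keys q.
      (mconst (Poly_Mapping.lookup p m) * monom_subst \<sigma> m) *
      (mconst (Poly_Mapping.lookup q m') * monom_subst \<sigma> m'))"
    by (simp add: poly_subst_sum poly_subst_single mconst_mult monom_subst_add ac_simps)
  also have "\<dots> = poly_subst \<sigma> p * poly_subst \<sigma> q"
    by (simp add: poly_subst_def sum_product)
  finally show ?thesis .
qed

lemma poly_subst_one [simp]: "poly_subst \<sigma> 1 = 1"
  by (simp add: poly_subst_def monom_subst_def mconst_def)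

lemma poly_subst_mvar [simp]: "poly_subst \<sigma> (mvar i) = \<sigma> i"
  by (simp add: mvar_def poly_subst_single monom_subst_def mconst_def)

lemma mvar_power: "(mvar i :: 'a::comm_ring_1 mpoly) ^ k = Poly_Mapping.single (Poly_Mapping.single i k) 1"
proof (induction k)
  case (Suc k)
  have "Poly_Mapping.single i 1 + Poly_Mapping.single i k = Poly_Mapping.single i (Suc k)"
    by (simp flip: single_add)
  then show ?case using Suc by (simp add: mvar_def mult_single)
qed (simp add: mvar_def)

lemma prod_single_one:
  "(\<Prod>i\<in>A. Poly_Mapping.single (f i) (1::'a::comm_ring_1)) = Poly_Mapping.single (\<Sum>i\<in>A. f i) 1"
  by (induction A rule: infinite_finite_induct) (simp_all add: mult_single)

lemma monom_subst_mvar: "monom_subst mvar m = (Poly_Mapping.single m 1 :: 'a::comm_ring_1 mpoly)"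
  unfolding monom_subst_def mvar_power prod_single_one by (simp flip: poly_mapping_sum_single)

lemma single_eq_mconst_monom: "Poly_Mapping.single m a = mconst a * monom_subst mvar m"
  by (simp add: monom_subst_mvar mconst_def mult_single)

section \<open>The polynomial ring \<open>R[X\<^sub>1, \<dots>, X\<^sub>N]\<close>\<close>

lemma in_polyring_iff:
  "p \<in> polyring N \<longleftrightarrow> (\<forall>m\<in>Poly_Mapping.keys p. Poly_Mapping.keys m \<subseteq> {1..N})"
  by (simp add: polyring_def)

lemma polyring_zero [simp]: "0 \<in> polyring N"
  by (simp add: polyring_def)

lemma polyring_one [simp]: "1 \<in> polyring N"
  by (simp add: polyring_def)

lemma polyring_mconst [simp]: "mconst a \<in> polyring N"
  by (simp add: polyring_def mconst_def)

lemma polyring_mvar: "i \<in> {1..N} \<Longrightarrow> mvar i \<in> polyring N"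
  by (simp add: polyring_def mvar_def)

lemma polyring_add: "p \<in> polyring N \<Longrightarrow> q \<in> polyring N \<Longrightarrow> p + q \<in> polyring N"
  unfolding in_polyring_iff using keys_add[of p q] by blast

lemma polyring_uminus: "p \<in> polyring N \<Longrightarrow> - p \<in> polyring N"
  by (simp add: polyring_def)

lemma polyring_diff: "p \<in> polyring N \<Longrightarrow> q \<in> polyring N \<Longrightarrow> p - q \<in> polyring N"
  using polyring_add[of p N "- q"] polyring_uminus[of q N] by simp

lemma polyring_mult:
  assumes "p \<in> polyring N" "q \<in> polyring N"
  shows "p * q \<in> polyring N"
  unfolding in_polyring_iff
proof
  fix m assume "m \<in> Poly_Mapping.keys (p * q)"
  then obtain a b where "m = a + b" "a \<in> Poly_Mapping.keys p" "b \<in> Poly_Mapping.keys q"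
    using keys_mult[of p q] by blast
  with assms show "Poly_Mapping.keys m \<subseteq> {1..N}"
    by (simp add: in_polyring_iff keys_add_nat)
qed

lemma polyring_sum: "(\<And>i. i \<in> A \<Longrightarrow> f i \<in> polyring N) \<Longrightarrow> (\<Sum>i\<in>A. f i) \<in> polyring N"
  by (induction A rule: infinite_finite_induct) (auto intro: polyring_add)

lemma polyring_prod: "(\<And>i. i \<in> A \<Longrightarrow> f i \<in> polyring N) \<Longrightarrow> (\<Prod>i\<in>A. f i) \<in> polyring N"
  by (induction A rule: infinite_finite_induct) (auto intro: polyring_mult)

lemma polyring_power: "p \<in> polyring N \<Longrightarrow> p ^ k \<in> polyring N"
  by (induction k) (auto intro: polyring_mult)

lemma polyring_poly_subst:
  assumes "p \<in> polyring N" "\<And>i. i \<in> {1..N} \<Longrightarrow> \<sigma> i \<in> polyring N"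
  shows "poly_subst \<sigma> p \<in> polyring N"
  unfolding poly_subst_def
proof (intro polyring_sum polyring_mult polyring_mconst)
  fix m assume "m \<in> Poly_Mapping.keys p"
  with assms(1) have "Poly_Mapping.keys m \<subseteq> {1..N}"
    by (simp add: in_polyring_iff)
  with assms(2) show "monom_subst \<sigma> m \<in> polyring N"
    unfolding monom_subst_def by (blast intro: polyring_prod polyring_power)
qed

lemma Var_pos: "i \<noteq> 0 \<Longrightarrow> Var N i = mvar i"
  by (simp add: Var_def mvar_def)

lemma Var_zero: "Var N 0 = 1 - (\<Sum>j\<in>{1..N}. mvar j)"
  by (simp add: Var_def mvar_def)

lemma polyring_Var:
  assumes "i \<le> N"
  shows "Var N i \<in> polyring N"
proof (cases "i = 0")
  case True
  have "(\<Sum>j\<in>{1..N}. mvar j) \<in> polyring N"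
    by (rule polyring_sum) (rule polyring_mvar)
  from polyring_diff[OF polyring_one this] True show ?thesis
    by (simp only: Var_zero)
next
  case False
  with assms show ?thesis
    by (simp add: Var_pos polyring_mvar)
qed

lemma sum_Var: "(\<Sum>k\<in>{0..N}. Var N k) = (1 :: 'a::comm_ring_1 mpoly)"
proof -
  have "(\<Sum>k\<in>{0..N}. Var N k) = Var N 0 + (\<Sum>k\<in>{1..N}. Var N k)"
    using sum.atLeast_Suc_atMost[of 0 N "Var N"] by simp
  also have "(\<Sum>k\<in>{1..N}. Var N k) = (\<Sum>k\<in>{1..N}. (mvar k :: 'a mpoly))"
    by (rule sum.cong) (auto simp: Var_pos)
  finally show ?thesis
    by (simp add: Var_zero)
qed

section \<open>Ideals generated by sets of polynomials\<close>

lemma in_gen_ideal_iff: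
  "x \<in> gen_ideal N S \<longleftrightarrow>
     (\<exists>F c. x = (\<Sum>s\<in>F. c s * s) \<and> finite F \<and> F \<subseteq> S \<and> (\<forall>s\<in>F. c s \<in> polyring N))"
  by (auto simp: gen_ideal_def)

lemma gen_ideal_zero [simp]: "0 \<in> gen_ideal N S"
  unfolding in_gen_ideal_iff by (rule exI[of _ "{}"]) auto

lemma gen_ideal_gen: "s \<in> S \<Longrightarrow> s \<in> gen_ideal N S"
  unfolding in_gen_ideal_iff by (intro exI[of _ "{s}"] exI[of _ "\<lambda>_. 1"]) auto

lemma gen_ideal_mono: "S \<subseteq> T \<Longrightarrow> gen_ideal N S \<subseteq> gen_ideal N T"
  unfolding gen_ideal_def by blast

lemma gen_ideal_add:
  assumes "x \<in> gen_ideal N S" "y \<in> gen_ideal N S"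
  shows "x + y \<in> gen_ideal N S"
proof -
  obtain F c where F: "x = (\<Sum>s\<in>F. c s * s)" "finite F" "F \<subseteq> S" "\<forall>s\<in>F. c s \<in> polyring N"
    using assms(1) by (auto simp: in_gen_ideal_iff)
  obtain G d where G: "y = (\<Sum>s\<in>G. d s * s)" "finite G" "G \<subseteq> S" "\<forall>s\<in>G. d s \<in> polyring N"
    using assms(2) by (auto simp: in_gen_ideal_iff)
  define e where "e s = (if s \<in> F then c s else 0) + (if s \<in> G then d s else 0)" for s
  have "(\<Sum>s\<in>F \<union> G. e s * s)
        = (\<Sum>s\<in>F \<union> G. if s \<in> F then c s * s else 0) + (\<Sum>s\<in>F \<union> G. if s \<in> G then d s * s else 0)"
    unfolding sum.distrib[symmetric] by (rule sum.cong) (auto simp: e_def distrib_right)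
  also have "\<dots> = x + y"
    using F G by (simp add: sum.inter_restrict[symmetric] Int_absorb1)
  finally have "x + y = (\<Sum>s\<in>F \<union> G. e s * s)" by simp
  moreover have "\<forall>s\<in>F \<union> G. e s \<in> polyring N"
    using F G by (auto simp: e_def intro!: polyring_add)
  ultimately show ?thesis
    using F G unfolding in_gen_ideal_iff by (intro exI[of _ "F \<union> G"] exI[of _ e]) auto
qed

lemma gen_ideal_mult:
  assumes "r \<in> polyring N" "x \<in> gen_ideal N S"
  shows "r * x \<in> gen_ideal N S"
proof -
  obtain F c where F: "x = (\<Sum>s\<in>F. c s * s)" "finite F" "F \<subseteq> S" "\<forall>s\<in>F. c s \<in> polyring N"
    using assms(2) by (auto simp: in_gen_ideal_iff)
  then have "r * x = (\<Sum>s\<in>F. (r * c s) * s)"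
    by (simp add: sum_distrib_left mult.assoc)
  with F assms(1) show ?thesis
    unfolding in_gen_ideal_iff by (intro exI[of _ F] exI[of _ "\<lambda>s. r * c s"]) (auto intro: polyring_mult)
qed

lemma gen_ideal_mult_right: "r \<in> polyring N \<Longrightarrow> x \<in> gen_ideal N S \<Longrightarrow> x * r \<in> gen_ideal N S"
  by (metis gen_ideal_mult mult.commute)

lemma gen_ideal_uminus: "x \<in> gen_ideal N S \<Longrightarrow> - x \<in> gen_ideal N S"
  using gen_ideal_mult[OF polyring_uminus[OF polyring_one]] by simp

lemma gen_ideal_sum: "(\<And>i. i \<in> A \<Longrightarrow> f i \<in> gen_ideal N S) \<Longrightarrow> (\<Sum>i\<in>A. f i) \<in> gen_ideal N S"
  by (induction A rule: infinite_finite_induct) (auto intro: gen_ideal_add)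

lemma gen_ideal_subset_polyring: "S \<subseteq> polyring N \<Longrightarrow> gen_ideal N S \<subseteq> polyring N"
  unfolding gen_ideal_def by (auto intro!: polyring_sum polyring_mult)

lemma ideal_sum_gen_ideal_subset:
  "ideal_sum (gen_ideal N S) (gen_ideal N T) \<subseteq> gen_ideal N (S \<union> T)"
  unfolding ideal_sum_def
  using gen_ideal_mono[of S "S \<union> T" N] gen_ideal_mono[of T "S \<union> T" N] by (auto intro: gen_ideal_add)

lemma ideal_sum_Inter_subset:
  assumes "K \<subseteq> polyring N"
  shows "ideal_sum K (ideal_Inter N (P ` A)) \<subseteq> ideal_Inter N ((\<lambda>J. ideal_sum (P J) K) ` A)"
proof
  fix x assume "x \<in> ideal_sum K (ideal_Inter N (P ` A))"
  then obtain a b where "x = b + a" "a \<in> K" "b \<in> polyring N" "\<forall>J\<in>A. b \<in> P J"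
    by (auto simp: ideal_sum_def ideal_Inter_def add.commute)
  with assms show "x \<in> ideal_Inter N ((\<lambda>J. ideal_sum (P J) K) ` A)"
    by (auto simp: ideal_sum_def ideal_Inter_def intro: polyring_add)
qed

lemma gen_ideal_mult_diff:
  assumes "a \<in> polyring N" "d \<in> polyring N" "a - b \<in> gen_ideal N S" "c - d \<in> gen_ideal N S"
  shows "a * c - b * d \<in> gen_ideal N S"
proof -
  have "a * c - b * d = a * (c - d) + d * (a - b)" by (simp add: algebra_simps)
  with assms show ?thesis by (simp add: gen_ideal_add gen_ideal_mult)
qed

lemma gen_ideal_power_diff:
  assumes "a \<in> polyring N" "b \<in> polyring N" "a - b \<in> gen_ideal N S"
  shows "a ^ k - b ^ k \<in> gen_ideal N S"
  by (induction k) (use assms in \<open>simp_all add: gen_ideal_mult_diff polyring_power\<close>)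

lemma gen_ideal_prod_power_diff:
  assumes "\<And>i. i \<in> A \<Longrightarrow> x i \<in> polyring N \<and> y i \<in> polyring N \<and> x i - y i \<in> gen_ideal N S"
  shows "(\<Prod>i\<in>A. x i ^ e i) - (\<Prod>i\<in>A. y i ^ e i) \<in> gen_ideal N S"
  using assms
proof (induction A rule: infinite_finite_induct)
  case (insert a A)
  then have "x a ^ e a - y a ^ e a \<in> gen_ideal N S" "x a ^ e a \<in> polyring N"
      "(\<Prod>i\<in>A. y i ^ e i) \<in> polyring N"
    by (auto intro!: gen_ideal_power_diff polyring_power polyring_prod)
  with insert show ?case
    by (simp add: gen_ideal_mult_diff)
qed auto

lemma poly_subst_gen_ideal:
  assumes "x \<in> gen_ideal N S" "\<And>i. i \<in> {1..N} \<Longrightarrow> \<sigma> i \<in> polyring N"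
    "\<And>s. s \<in> S \<Longrightarrow> poly_subst \<sigma> s \<in> gen_ideal N T"
  shows "poly_subst \<sigma> x \<in> gen_ideal N T"
proof -
  obtain F c where F: "x = (\<Sum>s\<in>F. c s * s)" "F \<subseteq> S" "\<forall>s\<in>F. c s \<in> polyring N"
    using assms(1) by (auto simp: in_gen_ideal_iff)
  then have "poly_subst \<sigma> x = (\<Sum>s\<in>F. poly_subst \<sigma> (c s) * poly_subst \<sigma> s)"
    by (simp add: poly_subst_sum poly_subst_mult)
  also have "\<dots> \<in> gen_ideal N T"
    using F assms by (auto intro!: gen_ideal_sum gen_ideal_mult polyring_poly_subst)
  finally show ?thesis .
qed

lemma diff_poly_subst_in_gen_ideal:
  assumes "p \<in> polyring N"
    "\<And>i. i \<in> {1..N} \<Longrightarrow> \<sigma> i \<in> polyring N \<and> mvar i - \<sigma> i \<in> gen_ideal N S"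
  shows "p - poly_subst \<sigma> p \<in> gen_ideal N S"
proof -
  have "p - poly_subst \<sigma> p
      = (\<Sum>m\<in>Poly_Mapping.keys p. mconst (Poly_Mapping.lookup p m) * (monom_subst mvar m - monom_subst \<sigma> m))"
    by (subst (1) poly_mapping_sum_single[of p])
       (simp add: single_eq_mconst_monom poly_subst_def sum_subtractf right_diff_distrib)
  also have "\<dots> \<in> gen_ideal N S"
  proof (intro gen_ideal_sum gen_ideal_mult[OF polyring_mconst])
    fix m assume "m \<in> Poly_Mapping.keys p"
    with assms(1) have "Poly_Mapping.keys m \<subseteq> {1..N}" by (simp add: in_polyring_iff)
    with assms(2) show "monom_subst mvar m - monom_subst \<sigma> m \<in> gen_ideal N S"
      unfolding monom_subst_def by (blast intro: gen_ideal_prod_power_diff polyring_mvar)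
  qed
  finally show ?thesis .
qed

section \<open>Absorbing the variables \<open>X\<^sub>n\<^sub>+\<^sub>1, \<dots>, X\<^sub>N\<close> into \<open>X\<^sub>k\<close>\<close>

text \<open>\<open>absorb_subst N n k\<close> is the substitution \<open>\<sigma>\<^sub>k\<close> and \<open>absorb_proj N n f\<close> the
  polynomial \<open>h\<close> above.\<close>

definition absorb_subst :: "nat \<Rightarrow> nat \<Rightarrow> nat \<Rightarrow> nat \<Rightarrow> 'a::comm_ring_1 mpoly" where
  "absorb_subst N n k i =
     (if i \<in> {n+1..N} then 0 else if i = k then mvar i + (\<Sum>j\<in>{n+1..N}. mvar j) else mvar i)"

definition absorb_proj :: "nat \<Rightarrow> nat \<Rightarrow> 'a::comm_ring_1 mpoly \<Rightarrow> 'a mpoly" where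
  "absorb_proj N n f = (\<Sum>k\<in>{0..n}. Var N k * poly_subst (absorb_subst N n k) f)"

lemma polyring_absorb_subst: "i \<in> {1..N} \<Longrightarrow> absorb_subst N n k i \<in> polyring N"
  by (auto simp: absorb_subst_def intro!: polyring_add polyring_sum polyring_mvar)

lemma mvar_diff_absorb_subst:
  assumes "i \<in> {1..N}"
  shows "mvar i - absorb_subst N n k i \<in> gen_ideal N (Var N ` {n+1..N})"
proof -
  let ?K = "gen_ideal N (Var N ` {n+1..N}) :: 'a mpoly set"
  have gen: "mvar j \<in> ?K" if "j \<in> {n+1..N}" for j
    using that by (intro gen_ideal_gen) (auto simp: Var_pos)
  then have "- (\<Sum>j\<in>{n+1..N}. mvar j) \<in> ?K"
    by (intro gen_ideal_uminus gen_ideal_sum)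
  with assms gen show ?thesis
    by (auto simp: absorb_subst_def)
qed

lemma poly_subst_absorb_Var_zero:
  assumes "k \<in> {1..n}" "n \<le> N"
  shows "poly_subst (absorb_subst N n k) (Var N 0) = Var N 0"
proof -
  let ?s = "\<Sum>j\<in>{n+1..N}. mvar j :: 'a mpoly"
  have split: "{1..N} = {1..n} \<union> {n+1..N}"
    using assms(2) by auto
  have "(\<Sum>j\<in>{1..N}. absorb_subst N n k j) = (\<Sum>j\<in>{1..n}. mvar j + (if j = k then ?s else 0))"
    unfolding split by (subst sum.union_disjoint) (auto simp: absorb_subst_def intro!: sum.cong)
  also have "\<dots> = (\<Sum>j\<in>{1..n}. mvar j) + ?s"
    using assms(1) by (simp add: sum.distrib)
  also have "\<dots> = (\<Sum>j\<in>{1..N}. mvar j)"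
    unfolding split by (simp add: sum.union_disjoint)
  finally show ?thesis
    by (simp add: Var_zero poly_subst_diff poly_subst_sum)
qed

lemma poly_subst_absorb_gen_ideal:
  assumes "k \<in> {0..n}" "k \<notin> J" "n \<le> N"
    and "x \<in> gen_ideal N (Var N ` (J \<union> {n+1..N}))"
  shows "poly_subst (absorb_subst N n k) x \<in> gen_ideal N (Var N ` J)"
proof (rule poly_subst_gen_ideal[OF assms(4) polyring_absorb_subst])
  fix s assume "s \<in> Var N ` (J \<union> {n+1..N})"
  then obtain i where i: "s = Var N i" "i \<in> J \<union> {n+1..N}" by blast
  show "poly_subst (absorb_subst N n k) s \<in> gen_ideal N (Var N ` J)"
  proof (cases "i = 0")
    case True
    with i have "i \<in> J" by auto
    with True assms(1,2) have "k \<in> {1..n}" by (cases "k = 0") auto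
    with i True assms(3) \<open>i \<in> J\<close> show ?thesis
      by (simp add: poly_subst_absorb_Var_zero gen_ideal_gen)
  next
    case False
    show ?thesis
    proof (cases "i \<in> {n+1..N}")
      case True
      with i False show ?thesis
        by (simp add: Var_pos absorb_subst_def)
    next
      case outside: False
      with i assms(1,2) have "i \<in> J" "i \<noteq> k"
        by auto
      with i False outside have "poly_subst (absorb_subst N n k) s = Var N i"
        by (simp add: Var_pos absorb_subst_def if_not_P[OF outside] del: atLeastAtMost_iff)
      with \<open>i \<in> J\<close> show ?thesis
        by (simp add: gen_ideal_gen)
    qed
  qed
qed

lemma polyring_poly_subst_absorb:
  "f \<in> polyring N \<Longrightarrow> poly_subst (absorb_subst N n k) f \<in> polyring N"
  by (erule polyring_poly_subst) (rule polyring_absorb_subst)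

lemma polyring_absorb_proj:
  assumes "n \<le> N" "f \<in> polyring N"
  shows "absorb_proj N n f \<in> polyring N"
  unfolding absorb_proj_def
proof (intro polyring_sum polyring_mult)
  fix k assume "k \<in> {0..n}"
  with assms show "Var N k \<in> polyring N" "poly_subst (absorb_subst N n k) f \<in> polyring N"
    by (simp_all add: polyring_Var polyring_poly_subst_absorb)
qed

lemma absorb_proj_in_gen_ideal:
  assumes "n \<le> N" "f \<in> polyring N"
    and "f \<in> ideal_sum (gen_ideal N (Var N ` J)) (gen_ideal N (Var N ` {n+1..N}))"
  shows "absorb_proj N n f \<in> gen_ideal N (Var N ` J)"
  unfolding absorb_proj_def
proof (rule gen_ideal_sum)
  fix k assume k: "k \<in> {0..n}"
  show "Var N k * poly_subst (absorb_subst N n k) f \<in> gen_ideal N (Var N ` J)"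
  proof (cases "k \<in> J")
    case True
    then have "Var N k \<in> gen_ideal N (Var N ` J)"
      by (intro gen_ideal_gen) auto
    with polyring_poly_subst_absorb[OF assms(2)] show ?thesis
      by (rule gen_ideal_mult_right)
  next
    case False
    have "f \<in> gen_ideal N (Var N ` (J \<union> {n+1..N}))"
      using assms(3) ideal_sum_gen_ideal_subset by (metis image_Un subsetD)
    with k False assms(1) have "poly_subst (absorb_subst N n k) f \<in> gen_ideal N (Var N ` J)"
      by (rule poly_subst_absorb_gen_ideal)
    with k assms(1) show ?thesis
      by (simp add: gen_ideal_mult polyring_Var)
  qed
qed

lemma diff_absorb_proj_in_gen_ideal:
  assumes "n \<le> N" "f \<in> polyring N"
  shows "f - absorb_proj N n f \<in> gen_ideal N (Var N ` {n+1..N})"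
proof -
  let ?K = "gen_ideal N (Var N ` {n+1..N})"
  have "f = (\<Sum>k\<in>{0..N}. Var N k) * f" by (simp add: sum_Var)
  also have "{0..N} = {0..n} \<union> {n+1..N}"
    using assms(1) by auto
  also have "(\<Sum>k\<in>{0..n} \<union> {n+1..N}. Var N k) * f
      = (\<Sum>k\<in>{0..n}. Var N k * f) + (\<Sum>j\<in>{n+1..N}. Var N j * f)"
    by (simp add: sum.union_disjoint distrib_right sum_distrib_right)
  finally have "f - absorb_proj N n f
      = (\<Sum>j\<in>{n+1..N}. Var N j * f) + (\<Sum>k\<in>{0..n}. Var N k * (f - poly_subst (absorb_subst N n k) f))"
    unfolding absorb_proj_def by (simp add: algebra_simps sum_subtractf)
  also have "\<dots> \<in> ?K"
  proof (intro gen_ideal_add gen_ideal_sum)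
    fix j assume "j \<in> {n+1..N}"
    then have "Var N j \<in> ?K"
      by (intro gen_ideal_gen imageI)
    with assms(2) show "Var N j * f \<in> ?K"
      by (rule gen_ideal_mult_right)
  next
    fix k assume "k \<in> {0..n}"
    with assms(1) have "Var N k \<in> polyring N"
      by (simp add: polyring_Var)
    moreover have "f - poly_subst (absorb_subst N n k) f \<in> ?K"
      using assms(2) by (rule diff_poly_subst_in_gen_ideal)
        (blast intro: polyring_absorb_subst mvar_diff_absorb_subst)
    ultimately show "Var N k * (f - poly_subst (absorb_subst N n k) f) \<in> ?K"
      by (rule gen_ideal_mult)
  qed
  finally show ?thesis .
qed

theorem lemma2p30:
  fixes N n :: nat and \<JJ> :: "nat set set"
  assumes "n \<le> N" and "\<forall>J\<in>\<JJ>. J \<subseteq> {0..N}"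
  shows "ideal_sum (gen_ideal N (Var N ` {n+1..N}))
           (ideal_Inter N ((\<lambda>J. gen_ideal N (Var N ` J)) ` \<JJ>))
       = (ideal_Inter N ((\<lambda>J. ideal_sum (gen_ideal N (Var N ` J)) (gen_ideal N (Var N ` {n+1..N}))) ` \<JJ>)
           :: 'a::comm_ring_1 mpoly set)"
    (is "ideal_sum ?K _ = _")
proof
  have "?K \<subseteq> polyring N"
    by (rule gen_ideal_subset_polyring) (auto intro: polyring_Var)
  then show "ideal_sum ?K (ideal_Inter N ((\<lambda>J. gen_ideal N (Var N ` J)) ` \<JJ>))
      \<subseteq> ideal_Inter N ((\<lambda>J. ideal_sum (gen_ideal N (Var N ` J)) ?K) ` \<JJ>)"
    by (rule ideal_sum_Inter_subset)
next
  show "ideal_Inter N ((\<lambda>J. ideal_sum (gen_ideal N (Var N ` J)) ?K) ` \<JJ>)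
        \<subseteq> ideal_sum ?K (ideal_Inter N ((\<lambda>J. gen_ideal N (Var N ` J)) ` \<JJ>))"
  proof
    fix f assume "f \<in> ideal_Inter N ((\<lambda>J. ideal_sum (gen_ideal N (Var N ` J)) ?K) ` \<JJ>)"
    then have f: "f \<in> polyring N" "\<And>J. J \<in> \<JJ> \<Longrightarrow> f \<in> ideal_sum (gen_ideal N (Var N ` J)) ?K"
      by (auto simp: ideal_Inter_def)
    let ?h = "absorb_proj N n f"
    have "f = (f - ?h) + ?h" by simp
    moreover have "f - ?h \<in> ?K"
      using assms(1) f(1) by (rule diff_absorb_proj_in_gen_ideal)
    moreover have "?h \<in> ideal_Inter N ((\<lambda>J. gen_ideal N (Var N ` J)) ` \<JJ>)"
      using assms(1) f by (simp add: ideal_Inter_def polyring_absorb_proj absorb_proj_in_gen_ideal)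
    ultimately show "f \<in> ideal_sum ?K (ideal_Inter N ((\<lambda>J. gen_ideal N (Var N ` J)) ` \<JJ>))"
      unfolding ideal_sum_def by blast
  qed
qed

end
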